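(* Let $\{G(n)\}$ be a sequence of random intersection graphs with $\mathbb E\,Y(n)^2=O(1)$ and $m(n)\to\infty$. Then with probability tending to $1$, for every pair of distinct attributes $w',w''\in W$ there are at most two vertices $v$ with $\{w',w''\}\subseteq S_v$.
   Context: Random intersection graph: given positive integers $n,m$ and a probability measure $P$ on $\{0,\dots,m\}$, $G(n,m,P)$ has vertex set $V=[n]$ and attribute set $W=\{w_1,\dots,w_m\}$; independent random subsets $S_1,\dots,S_n\subseteq W$ with $\mathbb P(S_v=S)=P(|S|)/\binom{m}{|S|}$; distinct $u,v$ adjacent iff $S_u\cap S_v\ne\emptyset$. For a sequence $G(n)=G(n,m(n),P(n))$, $X(n)$ has law $P(n)$ and $Y(n)=(n/m)^{1/2}X(n)$. *)

theory Defs
  imports "HOL-Probability.Probability" "HOL-Library.Landau_Symbols"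
begin

text \<open>Attributes are w_0,...,w_(m-1), represented as the naturals below m.
  P is a pmf on sizes {0..m}. A random attribute set: pick k with law P,
  then a uniform k-subset of the attributes, so that
  Pr(S_v = S) = P(|S|) / (m choose |S|).\<close>
definition rig_attr_pmf :: "nat \<Rightarrow> nat pmf \<Rightarrow> nat set pmf" where
  "rig_attr_pmf m P =
     bind_pmf P (\<lambda>k. pmf_of_set {S. S \<subseteq> {..<m} \<and> card S = k})"

definition rig_pmf :: "nat \<Rightarrow> nat \<Rightarrow> nat pmf \<Rightarrow> (nat \<Rightarrow> nat set) pmf" where
  "rig_pmf n m P = Pi_pmf {1..n} {} (\<lambda>_. rig_attr_pmf m P)"

definition pairs_at_most_two :: "nat \<Rightarrow> nat \<Rightarrow> (nat \<Rightarrow> nat set) \<Rightarrow> bool" where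
  "pairs_at_most_two n m S \<longleftrightarrow>
     (\<forall>w1<m. \<forall>w2<m. w1 \<noteq> w2 \<longrightarrow> card {v\<in>{1..n}. {w1, w2} \<subseteq> S v} \<le> 2)"

end

theory Submission
  imports Defs "HOL-Real_Asymp.Real_Asymp"
begin

text \<open>A vertex whose attribute set has size k contains two given attributes with probability
  k(k-1)/(m(m-1)), so it contains them with probability at most q = E X^2/(m(m-1)).
  By independence and a union bound over the m^2 ordered attribute pairs and the at most
  n^3 vertex triples, some pair is shared by three vertices with probability at most
  m^2 (n q)^3. Since n E X^2 = m E Y^2 = O(m), this is O(m^2/(m-1)^3) \<rightarrow> 0.\<close>

lemma card_subsets_containing_pair:
  assumes "finite A" "a \<in> A" "b \<in> A" "a \<noteq> b" "2 \<le> k"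
  shows "card {S. S \<subseteq> A \<and> card S = k \<and> {a, b} \<subseteq> S} = (card A - 2) choose (k - 2)"
proof -
  let ?R = "A - {a, b}"
  have "{S. S \<subseteq> A \<and> card S = k \<and> {a, b} \<subseteq> S}
        = (\<lambda>T. T \<union> {a, b}) ` {T. T \<subseteq> ?R \<and> card T = k - 2}"
  proof (intro equalityI subsetI)
    fix S assume S: "S \<in> {S. S \<subseteq> A \<and> card S = k \<and> {a, b} \<subseteq> S}"
    then have "finite S" using assms(1) finite_subset by blast
    then have "card (S - {a, b}) = k - 2" using S assms(4) by (simp add: card_Diff_subset)
    moreover have "S = (S - {a, b}) \<union> {a, b}" using S by auto
    ultimately show "S \<in> (\<lambda>T. T \<union> {a, b}) ` {T. T \<subseteq> ?R \<and> card T = k - 2}"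
      using S by blast
  next
    fix S assume "S \<in> (\<lambda>T. T \<union> {a, b}) ` {T. T \<subseteq> ?R \<and> card T = k - 2}"
    then obtain T where T: "T \<subseteq> ?R" "card T = k - 2" "S = T \<union> {a, b}" by blast
    then have "finite T" using assms(1) finite_subset by blast
    then have "card S = k" using T assms by (subst T(3), subst card_Un_disjoint) auto
    then show "S \<in> {S. S \<subseteq> A \<and> card S = k \<and> {a, b} \<subseteq> S}" using T assms by auto
  qed
  moreover have "inj_on (\<lambda>T. T \<union> {a, b}) {T. T \<subseteq> ?R \<and> card T = k - 2}"
    by (rule inj_onI) blast
  moreover have "card ?R = card A - 2" using assms by (simp add: card_Diff_subset)
  ultimately show ?thesis using assms(1) by (simp add: card_image n_subsets)
qed

lemma binomial_times_falling_two:
  assumes "2 \<le> k" "k \<le> n"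
  shows "(n choose k) * (k * (k - 1)) = n * (n - 1) * ((n - 2) choose (k - 2))"
proof -
  have twice_choose_two: "2 * (x choose 2) = x * (x - 1)" for x :: nat
  proof -
    have "even (x * (x - 1))" by (cases "even x") auto
    then show ?thesis by (simp add: choose_two)
  qed
  have "(n choose k) * (k choose 2) = (n choose 2) * ((n - 2) choose (k - 2))"
    using assms by (intro choose_mult) auto
  then show ?thesis
    by (metis twice_choose_two mult.left_commute mult.assoc)
qed

lemma measure_bind_pmf:
  "measure_pmf.prob (bind_pmf M N) X = (\<integral>x. measure_pmf.prob (N x) X \<partial>M)"
  unfolding measure_pmf_bind
  by (rule measure_pmf.measure_bind)
     (auto simp: space_subprob_algebra measure_pmf.subprob_space_axioms)

lemma prob_uniform_subset_contains_pair_le: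
  assumes "finite A" "a \<in> A" "b \<in> A" "a \<noteq> b"
  shows "measure_pmf.prob (pmf_of_set {S. S \<subseteq> A \<and> card S = k}) {S. {a, b} \<subseteq> S}
           \<le> real k ^ 2 / (real (card A) * (real (card A) - 1))"
proof -
  let ?N = "card A" and ?Sk = "{S. S \<subseteq> A \<and> card S = k}"
  have N2: "?N \<ge> 2"
    using assms card_mono[of A "{a, b}"] by simp
  then have denom_pos: "real ?N * (real ?N - 1) > 0" by simp
  have fin: "finite ?Sk" using assms(1) by (auto intro: finite_subset[of _ "Pow A"])
  have card_Sk: "card ?Sk = ?N choose k" using n_subsets[OF assms(1)] by simp
  have nonempty: "?Sk \<noteq> {}" if "k \<le> ?N"
    using obtain_subset_with_card_n[OF that] by blast
  consider "?N < k" | "k < 2" | "2 \<le> k" "k \<le> ?N" by linarith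
  then show ?thesis
  proof cases
    case 1 \<comment> \<open>no k-subsets exist and the uniform distribution is junk, but the bound is \<ge> 1\<close>
    then have "real ?N * (real ?N - 1) \<le> real k ^ 2"
      using N2 unfolding power2_eq_square by (intro mult_mono) auto
    then have "1 \<le> real k ^ 2 / (real ?N * (real ?N - 1))" using denom_pos by simp
    then show ?thesis using measure_pmf.prob_le_1 order_trans by blast
  next
    case 2
    have "?Sk \<inter> {S. {a, b} \<subseteq> S} = {}"
    proof (intro equals0I)
      fix S assume S: "S \<in> ?Sk \<inter> {S. {a, b} \<subseteq> S}"
      then have "card {a, b} \<le> card S" using assms(1) finite_subset by (intro card_mono) auto
      with S 2 assms(4) show False by simp
    qed
    then show ?thesis using fin nonempty 2 N2 by (simp add: measure_pmf_of_set)
  next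
    case 3
    have "?Sk \<inter> {S. {a, b} \<subseteq> S} = {S. S \<subseteq> A \<and> card S = k \<and> {a, b} \<subseteq> S}"
      by blast
    then have "measure_pmf.prob (pmf_of_set ?Sk) {S. {a, b} \<subseteq> S}
               = real ((?N - 2) choose (k - 2)) / real (?N choose k)"
      using fin nonempty 3 card_Sk card_subsets_containing_pair[OF assms 3(1)]
      by (simp add: measure_pmf_of_set)
    also have "\<dots> = real (k * (k - 1)) / real (?N * (?N - 1))"
      using binomial_times_falling_two[OF 3] 3 N2
      by (simp add: frac_eq_eq ac_simps flip: of_nat_mult)
    also have "\<dots> = real (k * (k - 1)) / (real ?N * (real ?N - 1))"
      using N2 by (simp add: of_nat_diff)
    also have "\<dots> \<le> real k ^ 2 / (real ?N * (real ?N - 1))"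
      using denom_pos
      by (intro divide_right_mono) (auto simp: power2_eq_square intro: mult_left_mono)
    finally show ?thesis .
  qed
qed

lemma prob_rig_attr_contains_pair_le:
  assumes "a \<noteq> b" "a < m" "b < m" "integrable (measure_pmf P) (\<lambda>k. real k ^ 2)"
  shows "measure_pmf.prob (rig_attr_pmf m P) {S. {a, b} \<subseteq> S}
           \<le> (\<integral>k. real k ^ 2 \<partial>P) / (real m * (real m - 1))"
proof -
  have "measure_pmf.prob (rig_attr_pmf m P) {S. {a, b} \<subseteq> S}
        = (\<integral>k. measure_pmf.prob (pmf_of_set {S. S \<subseteq> {..<m} \<and> card S = k})
                 {S. {a, b} \<subseteq> S} \<partial>P)"
    unfolding rig_attr_pmf_def by (rule measure_bind_pmf)
  also have "\<dots> \<le> (\<integral>k. real k ^ 2 / (real m * (real m - 1)) \<partial>P)"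
  proof (rule integral_mono)
    show "integrable P (\<lambda>k. real k ^ 2 / (real m * (real m - 1)))"
      using assms(4) by (rule integrable_divide)
  qed (use prob_uniform_subset_contains_pair_le[of "{..<m}" a b] assms
       in \<open>auto intro: measure_pmf.integrable_const_bound[where B = 1]\<close>)
  also have "\<dots> = (\<integral>k. real k ^ 2 \<partial>P) / (real m * (real m - 1))"
    by (rule integral_divide_zero)
  finally show ?thesis .
qed

lemma prob_rig_pmf_all_in:
  assumes "T \<subseteq> {1..n}"
  shows "measure_pmf.prob (rig_pmf n m P) {S. \<forall>v\<in>T. S v \<in> E}
           = measure_pmf.prob (rig_attr_pmf m P) E ^ card T"
proof -
  let ?B = "\<lambda>v. if v \<in> T then E else UNIV"
  have "{S. \<forall>v\<in>T. S v \<in> E} = Pi {1..n} ?B" using assms by (auto simp: Pi_def)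
  then have "measure_pmf.prob (rig_pmf n m P) {S. \<forall>v\<in>T. S v \<in> E}
             = (\<Prod>v\<in>{1..n}. measure_pmf.prob (rig_attr_pmf m P) (?B v))"
    unfolding rig_pmf_def by (simp add: measure_Pi_pmf_Pi)
  also have "\<dots> = measure_pmf.prob (rig_attr_pmf m P) E ^ card T"
    using assms by (simp add: if_distrib prod.If_cases Int_absorb1)
  finally show ?thesis .
qed

lemma not_pairs_at_most_twoE:
  assumes "\<not> pairs_at_most_two n m S"
  obtains a b T where "a < m" "b < m" "a \<noteq> b" "T \<subseteq> {1..n}" "card T = 3"
    "\<forall>v\<in>T. {a, b} \<subseteq> S v"
proof -
  obtain a b where ab: "a < m" "b < m" "a \<noteq> b"
    and "3 \<le> card {v\<in>{1..n}. {a, b} \<subseteq> S v}"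
    using assms unfolding pairs_at_most_two_def by force
  then obtain T where "T \<subseteq> {v\<in>{1..n}. {a, b} \<subseteq> S v}" "card T = 3"
    by (meson obtain_subset_with_card_n)
  with ab show thesis by (intro that[of a b T]) auto
qed

lemma prob_not_pairs_at_most_two_le:
  assumes "integrable (measure_pmf P) (\<lambda>k. real k ^ 2)" "m \<ge> 2"
  defines "q \<equiv> (\<integral>k. real k ^ 2 \<partial>P) / (real m * (real m - 1))"
  shows "measure_pmf.prob (rig_pmf n m P) {S. \<not> pairs_at_most_two n m S}
           \<le> real m ^ 2 * (real n * q) ^ 3"
proof -
  let ?G = "rig_pmf n m P"
  define I where "I = {(a, b). a < m \<and> b < m \<and> a \<noteq> b} \<times> {T. T \<subseteq> {1..n} \<and> card T = 3}"
  define shared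
    where "shared = (\<lambda>((a, b), T). {S :: nat \<Rightarrow> nat set. \<forall>v\<in>T. {a, b} \<subseteq> S v})"
  have fin_I: "finite I"
  proof -
    have "finite {(a, b). a < m \<and> b < m \<and> a \<noteq> b}"
      by (rule finite_subset[of _ "{..<m} \<times> {..<m}"]) auto
    moreover have "finite {T. T \<subseteq> {1..n} \<and> card T = 3}"
      by (rule finite_subset[of _ "Pow {1..n}"]) auto
    ultimately show ?thesis by (simp add: I_def)
  qed
  have card_I: "card I \<le> m ^ 2 * n ^ 3"
  proof -
    have "card {(a, b). a < m \<and> b < m \<and> a \<noteq> b} \<le> card ({..<m} \<times> {..<m})"
      by (intro card_mono) auto
    moreover have "card {T. T \<subseteq> {1..n} \<and> card T = 3} = n choose 3"
      using n_subsets[of "{1..n}" 3] by simp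
    moreover have "n choose 3 \<le> n ^ 3"
      using binomial_le_pow[of 3 n] by (cases "3 \<le> n") (auto simp: binomial_eq_0)
    ultimately show ?thesis
      unfolding I_def card_cartesian_product by (intro mult_mono) (auto simp: power2_eq_square)
  qed
  have "{S. \<not> pairs_at_most_two n m S} \<subseteq> (\<Union>i\<in>I. shared i)"
    by (auto simp: I_def shared_def elim!: not_pairs_at_most_twoE) blast
  then have "measure_pmf.prob ?G {S. \<not> pairs_at_most_two n m S}
             \<le> measure_pmf.prob ?G (\<Union>i\<in>I. shared i)"
    by (intro measure_pmf.finite_measure_mono) auto
  also have "\<dots> \<le> (\<Sum>i\<in>I. measure_pmf.prob ?G (shared i))"
    using fin_I by (intro measure_UNION_le) auto
  also have "\<dots> \<le> (\<Sum>i\<in>I. q ^ 3)"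
  proof (intro sum_mono)
    fix i assume "i \<in> I"
    then obtain a b T where i: "i = ((a, b), T)" "a < m" "b < m" "a \<noteq> b"
      "T \<subseteq> {1..n}" "card T = 3"
      by (auto simp: I_def)
    have "measure_pmf.prob ?G (shared i)
          = measure_pmf.prob (rig_attr_pmf m P) {X. {a, b} \<subseteq> X} ^ 3"
      using prob_rig_pmf_all_in[OF i(5), of m P "{X. {a, b} \<subseteq> X}"] i
      by (simp add: shared_def)
    also have "\<dots> \<le> q ^ 3"
      using prob_rig_attr_contains_pair_le[OF i(4,2,3) assms(1)]
      by (intro power_mono) (auto simp: q_def)
    finally show "measure_pmf.prob ?G (shared i) \<le> q ^ 3" .
  qed
  also have "\<dots> \<le> real m ^ 2 * real n ^ 3 * q ^ 3"
  proof -
    have "q \<ge> 0" unfolding q_def using assms(2) by (intro divide_nonneg_pos integral_nonneg) auto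
    then show ?thesis
      using card_I by (simp add: mult_right_mono flip: of_nat_power of_nat_mult of_nat_le_iff)
  qed
  finally show ?thesis by (simp add: power_mult_distrib)
qed

lemma prob_pairs_at_most_two_ge:
  assumes "integrable (measure_pmf P) (\<lambda>k. real k ^ 2)" "m \<ge> 2"
    and second_moment: "real n * (\<integral>k. real k ^ 2 \<partial>P) \<le> c * real m"
  shows "1 - c ^ 3 * real m ^ 2 / (real m - 1) ^ 3
           \<le> measure_pmf.prob (rig_pmf n m P) {S. pairs_at_most_two n m S}"
proof -
  let ?G = "rig_pmf n m P"
  define q where "q = (\<integral>k. real k ^ 2 \<partial>P) / (real m * (real m - 1))"
  have m1: "real m - 1 > 0" using assms(2) by simp
  have q_nonneg: "q \<ge> 0" unfolding q_def using m1 by (intro divide_nonneg_pos integral_nonneg) auto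
  have "real n * q = real n * (\<integral>k. real k ^ 2 \<partial>P) / real m / (real m - 1)"
    by (simp add: q_def field_simps)
  also have "\<dots> \<le> c * real m / real m / (real m - 1)"
    using second_moment m1 by (intro divide_right_mono) auto
  finally have nq: "real n * q \<le> c / (real m - 1)" using assms(2) by simp
  have "measure_pmf.prob ?G {S. \<not> pairs_at_most_two n m S} \<le> real m ^ 2 * (real n * q) ^ 3"
    using prob_not_pairs_at_most_two_le[OF assms(1,2)] by (simp add: q_def)
  also have "\<dots> \<le> real m ^ 2 * (c / (real m - 1)) ^ 3"
    using nq q_nonneg by (intro mult_left_mono power_mono) auto
  also have "\<dots> = c ^ 3 * real m ^ 2 / (real m - 1) ^ 3" by (simp add: power_divide)
  finally show ?thesis
    using measure_pmf.prob_compl[of "{S. pairs_at_most_two n m S}" ?G]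
    by (simp add: Compl_eq_Diff_UNIV[symmetric] Collect_neg_eq[symmetric])
qed

theorem mainTheorem17:
  fixes m :: "nat \<Rightarrow> nat" and P :: "nat \<Rightarrow> nat pmf"
  assumes m_pos: "\<And>n. m n > 0"
    and P_supp: "\<And>n. set_pmf (P n) \<subseteq> {0..m n}"
    and EY2: "(\<lambda>n. measure_pmf.expectation (P n)
                 (\<lambda>k. (sqrt (real n / real (m n)) * real k)\<^sup>2)) \<in> O(\<lambda>_. 1)"
    and m_inf: "filterlim m at_top at_top"
  shows "(\<lambda>n. measure_pmf.prob (rig_pmf n (m n) (P n))
            {S. pairs_at_most_two n (m n) S}) \<longlonglongrightarrow> 1"
proof -
  have EY2_eq: "measure_pmf.expectation (P n) (\<lambda>k. (sqrt (real n / real (m n)) * real k)\<^sup>2)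
                = real n / real (m n) * (\<integral>k. real k ^ 2 \<partial>P n)" for n
    by (simp add: power_mult_distrib)
  from EY2 obtain c
    where "eventually (\<lambda>n. real n / real (m n) * (\<integral>k. real k ^ 2 \<partial>P n) \<le> c) sequentially"
    by (elim landau_o.bigE) (auto simp: EY2_eq elim!: eventually_mono)
  moreover have "eventually (\<lambda>n. m n \<ge> 2) sequentially"
    using m_inf by (simp add: filterlim_at_top)
  ultimately have "eventually (\<lambda>n. 1 - c ^ 3 * real (m n) ^ 2 / (real (m n) - 1) ^ 3
        \<le> measure_pmf.prob (rig_pmf n (m n) (P n)) {S. pairs_at_most_two n (m n) S}) sequentially"
  proof eventually_elim
    case (elim n)
    have "integrable (measure_pmf (P n)) (\<lambda>k. real k ^ 2)"
      using P_supp finite_subset by (intro integrable_measure_pmf_finite) blast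
    moreover have "real n * (\<integral>k. real k ^ 2 \<partial>P n) \<le> c * real (m n)"
      using elim m_pos[of n] by (simp add: field_simps)
    ultimately show ?case using elim(2) prob_pairs_at_most_two_ge by blast
  qed
  moreover have "eventually (\<lambda>n. measure_pmf.prob (rig_pmf n (m n) (P n))
                   {S. pairs_at_most_two n (m n) S} \<le> 1) sequentially"
    by (simp add: measure_pmf.prob_le_1)
  moreover have "(\<lambda>n. 1 - c ^ 3 * real (m n) ^ 2 / (real (m n) - 1) ^ 3) \<longlonglongrightarrow> 1"
  proof -
    have "((\<lambda>x::real. 1 - c ^ 3 * x ^ 2 / (x - 1) ^ 3) \<longlongrightarrow> 1) at_top" by real_asymp
    then show ?thesis
      by (rule filterlim_compose) (rule filterlim_compose[OF filterlim_real_sequentially m_inf])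
  qed
  ultimately show ?thesis
    by (rule tendsto_sandwich[OF _ _ _ tendsto_const])
qed

end
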